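(* Let $F(\alpha,\beta)=\frac{1}{\sqrt2}(\gamma(\beta)e^{i\alpha},\gamma(\beta)e^{-i\alpha})$ on $S^1\times S^1$. Then $F$ is a Lagrangian immersion. If $F(\alpha_1,\beta_1)=F(\alpha_2,\beta_2)$ with $(\alpha_1,\beta_1)\neq(\alpha_2,\beta_2)$, then $\rho(\beta_1)=\rho(\beta_2)$, $f(\beta_1)\equiv f(\beta_2)+\pi\pmod{2\pi}$ and $\alpha_1\equiv\alpha_2+\pi\pmod{2\pi}$; each of $(\alpha_1,\beta_1)$ and $(\alpha_2,\beta_2)$ determines the other uniquely, so every self-intersection point of $L_\gamma$ is a double point. At such a double point $\partial_\alpha F(\alpha_1,\beta_1)=\partial_\alpha F(\alpha_2,\beta_2)$, so the self-intersection is never transversal; the two sheets are tangent (span a common $2$-plane) if and only if $\dot\gamma(\beta_1)$ and $\dot\gamma(\beta_2)$ are parallel.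
   Context: Let $\gamma:S^1=\mathbb{R}/2\pi\mathbb{Z}\to\mathbb{C}\setminus\{0\}$ be a smooth regular simple closed curve written as $\gamma(\beta)=\rho(\beta)e^{if(\beta)}$ with $\rho>0$. $\mathbb{C}^2$ carries the standard symplectic form $\frac i2(dz_1\wedge d\bar z_1+dz_2\wedge d\bar z_2)$ and Euclidean metric. $L_\gamma=F(S^1\times S^1)$. *)

theory Defs
  imports "HOL-Analysis.Analysis"
begin

definition vderiv :: "(real \<Rightarrow> 'a::real_normed_vector) \<Rightarrow> real \<Rightarrow> 'a" where
  "vderiv g t = vector_derivative g (at t)"

definition smooth_curve :: "(real \<Rightarrow> 'a::real_normed_vector) \<Rightarrow> bool" where
  "smooth_curve g \<longleftrightarrow> (\<forall>n t. ((vderiv ^^ n) g) differentiable (at t))"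

text \<open>Congruence modulo 2 pi (equality on S^1 = R / 2 pi Z).\<close>
definition cong2pi :: "real \<Rightarrow> real \<Rightarrow> bool" where
  "cong2pi x y \<longleftrightarrow> (\<exists>k::int. x - y = 2 * pi * of_int k)"

definition torus_eq :: "real \<times> real \<Rightarrow> real \<times> real \<Rightarrow> bool" where
  "torus_eq p q \<longleftrightarrow> cong2pi (fst p) (fst q) \<and> cong2pi (snd p) (snd q)"

definition smooth_regular_simple_closed :: "(real \<Rightarrow> complex) \<Rightarrow> bool" where
  "smooth_regular_simple_closed g \<longleftrightarrow>
     smooth_curve g \<and> (\<forall>t. g (t + 2 * pi) = g t) \<and> (\<forall>t. vderiv g t \<noteq> 0)
     \<and> (\<forall>s t. g s = g t \<longrightarrow> cong2pi s t)"

text \<open>The standard symplectic form (i/2)(dz1\<and>dz1bar + dz2\<and>dz2bar) on C^2.\<close>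
definition omega :: "complex \<times> complex \<Rightarrow> complex \<times> complex \<Rightarrow> real" where
  "omega u v = Im (cnj (fst u) * fst v) + Im (cnj (snd u) * snd v)"

definition Fmap :: "(real \<Rightarrow> complex) \<Rightarrow> real \<times> real \<Rightarrow> complex \<times> complex" where
  "Fmap g p = (g (snd p) * exp (\<i> * of_real (fst p)) / of_real (sqrt 2),
               g (snd p) * exp (- \<i> * of_real (fst p)) / of_real (sqrt 2))"

definition lagrangian_immersion :: "(real \<times> real \<Rightarrow> complex \<times> complex) \<Rightarrow> bool" where
  "lagrangian_immersion F \<longleftrightarrow> (\<forall>p. \<exists>D. (F has_derivative D) (at p) \<and> inj D
      \<and> (\<forall>u v. omega (D u) (D v) = 0))"

definition dF_alpha :: "(real \<Rightarrow> complex) \<Rightarrow> real \<times> real \<Rightarrow> complex \<times> complex" where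
  "dF_alpha g p = vector_derivative (\<lambda>a. Fmap g (a, snd p)) (at (fst p))"

definition dF_beta :: "(real \<Rightarrow> complex) \<Rightarrow> real \<times> real \<Rightarrow> complex \<times> complex" where
  "dF_beta g p = vector_derivative (\<lambda>b. Fmap g (fst p, b)) (at (snd p))"

definition tangent_plane :: "(real \<Rightarrow> complex) \<Rightarrow> real \<times> real \<Rightarrow> (complex \<times> complex) set" where
  "tangent_plane g p = span {dF_alpha g p, dF_beta g p}"

definition transversal_at :: "(real \<Rightarrow> complex) \<Rightarrow> real \<times> real \<Rightarrow> real \<times> real \<Rightarrow> bool" where
  "transversal_at g p q \<longleftrightarrow> span (tangent_plane g p \<union> tangent_plane g q) = UNIV"

definition parallel :: "complex \<Rightarrow> complex \<Rightarrow> bool" where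
  "parallel u v \<longleftrightarrow> (\<exists>c::real. u = c *\<^sub>R v \<or> v = c *\<^sub>R u)"

end

theory Submission
  imports Defs
begin

(* F(alpha, beta) is the image of the diagonal point (gamma beta, gamma beta) under the circle action
   (z1, z2) -> (e^(i alpha) z1, e^(-i alpha) z2) / sqrt 2, which is injective, linear and scales omega
   by 1/2. Hence dF maps h to this action applied to h1 (i gamma, -i gamma) + h2 (gamma', gamma'),
   an antidiagonal plus a diagonal vector; all such vectors are omega-orthogonal, so F is a
   Lagrangian immersion.
   If F(alpha1, beta1) = F(alpha2, beta2), multiplying the two coordinates gives
   gamma(beta1)^2 = gamma(beta2)^2. Since gamma is simple, either the parameters agree on the torus,
   or gamma(beta1) = -gamma(beta2) and alpha1 = alpha2 + pi. In the second case the two circle actions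
   differ by a sign, so d/dalpha F agrees on both sheets; the two tangent planes share a line and span
   at most 3 real dimensions of C^2, and they coincide iff the diagonal vectors of gamma'(beta1) and
   gamma'(beta2) are parallel. *)

lemma exp_i_eq_iff_cong2pi:
  "exp (\<i> * complex_of_real x) = exp (\<i> * complex_of_real y) \<longleftrightarrow> cong2pi x y"
proof -
  have "exp (\<i> * complex_of_real x) = exp (\<i> * complex_of_real y) \<longleftrightarrow> sin x = sin y \<and> cos x = cos y"
    by (auto simp flip: cis_conv_exp simp: complex_eq_iff)
  also have "\<dots> \<longleftrightarrow> cong2pi x y"
    unfolding sin_cos_eq_iff cong2pi_def by (simp add: algebra_simps)
  finally show ?thesis .
qed

lemma exp_i_add_pi: "exp (\<i> * complex_of_real (x + pi)) = - exp (\<i> * complex_of_real x)"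
  by (simp add: algebra_simps exp_add)

lemma cong2pi_add_pi_iff:
  "cong2pi x (y + pi) \<longleftrightarrow> exp (\<i> * complex_of_real x) = - exp (\<i> * complex_of_real y)"
  by (simp flip: exp_i_eq_iff_cong2pi exp_i_add_pi)

definition circle_action :: "real \<Rightarrow> complex \<times> complex \<Rightarrow> complex \<times> complex" where
  "circle_action a u = (exp (\<i> * of_real a) * fst u / of_real (sqrt 2),
                        exp (- \<i> * of_real a) * snd u / of_real (sqrt 2))"

lemma Fmap_eq_circle_action: "Fmap g (a, b) = circle_action a (g b, g b)"
  by (simp add: Fmap_def circle_action_def mult.commute)

lemma bounded_linear_circle_action: "bounded_linear (circle_action a)"
  unfolding circle_action_def
  by (intro bounded_linear_Pair bounded_linear_compose[OF bounded_linear_divide]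
      bounded_linear_compose[OF bounded_linear_mult_right] bounded_linear_fst bounded_linear_snd)

lemma inj_circle_action: "inj (circle_action a)"
  by (rule injI) (simp add: circle_action_def prod_eq_iff)

lemma circle_action_add_pi: "circle_action (a + pi) u = - circle_action a u"
proof -
  have "exp (- \<i> * complex_of_real (a + pi)) = exp (- \<i> * complex_of_real a) * exp (- (\<i> * pi))"
    by (simp add: algebra_simps flip: exp_add)
  also have "\<dots> = - exp (- \<i> * complex_of_real a)"
    by (simp add: exp_minus)
  finally have "exp (- \<i> * complex_of_real (a + pi)) = - exp (- \<i> * complex_of_real a)" .
  then show ?thesis
    unfolding circle_action_def exp_i_add_pi by simp
qed

lemma circle_action_cong: "cong2pi a a' \<Longrightarrow> circle_action a = circle_action a'"
proof -
  assume "cong2pi a a'"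
  then have "exp (\<i> * complex_of_real a) = exp (\<i> * complex_of_real a')"
    by (simp add: exp_i_eq_iff_cong2pi)
  moreover have "exp (- \<i> * complex_of_real t) = inverse (exp (\<i> * complex_of_real t))" for t
    by (simp add: exp_minus)
  ultimately show ?thesis by (simp add: circle_action_def fun_eq_iff)
qed

lemma cnj_mult_unit_scaled:
  assumes "cnj E * E = 1"
  shows "cnj (E * z / of_real (sqrt 2)) * (E * w / of_real (sqrt 2)) = cnj z * w / 2"
proof -
  have "cnj (E * z / of_real (sqrt 2)) * (E * w / of_real (sqrt 2))
      = cnj z * w * (cnj E * E) / (of_real (sqrt 2) * of_real (sqrt 2))"
    by (simp add: field_simps)
  also have "\<dots> = cnj z * w / 2"
    using assms by (simp flip: of_real_mult)
  finally show ?thesis .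
qed

lemma omega_circle_action: "omega (circle_action a u) (circle_action a v) = omega u v / 2"
proof -
  have unit: "cnj (exp (\<i> * complex_of_real a)) * exp (\<i> * complex_of_real a) = 1"
    "cnj (exp (- \<i> * complex_of_real a)) * exp (- \<i> * complex_of_real a) = 1"
    by (simp_all add: exp_cnj flip: exp_add)
  show ?thesis
    unfolding omega_def circle_action_def fst_conv snd_conv
      cnj_mult_unit_scaled[OF unit(1)] cnj_mult_unit_scaled[OF unit(2)]
    by (simp add: field_simps)
qed

lemma omega_antidiagonal_diagonal:
  "omega (x *\<^sub>R (u, - u) + y *\<^sub>R (w, w)) (x' *\<^sub>R (u, - u) + y' *\<^sub>R (w, w)) = 0"
  by (simp add: omega_def algebra_simps)

lemma inj_antidiagonal_diagonal:
  fixes u w :: "'a::real_vector"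
  assumes "u \<noteq> 0" "w \<noteq> 0"
  shows "inj (\<lambda>h::real \<times> real. fst h *\<^sub>R (u, - u) + snd h *\<^sub>R (w, w))"
proof (rule injI)
  fix h k :: "real \<times> real"
  define a b where "a = fst h - fst k" and "b = snd h - snd k"
  assume "fst h *\<^sub>R (u, - u) + snd h *\<^sub>R (w, w) = fst k *\<^sub>R (u, - u) + snd k *\<^sub>R (w, w)"
  then have "a *\<^sub>R u + b *\<^sub>R w = 0" and "- (a *\<^sub>R u) + b *\<^sub>R w = 0"
    by (simp_all add: a_def b_def prod_eq_iff algebra_simps)
  then have "2 *\<^sub>R (b *\<^sub>R w) = 0" and "2 *\<^sub>R (a *\<^sub>R u) = 0"
    by (simp_all only: scaleR_2) (metis add.commute add.right_inverse add_diff_cancel_left' diff_add_cancel)+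
  with assms have "a = 0" "b = 0"
    by simp_all
  then show "h = k"
    by (simp add: a_def b_def prod_eq_iff)
qed

lemma span_insert_scaleR:
  assumes "c \<noteq> 0"
  shows "span (insert (c *\<^sub>R x) S) = span (insert x S)"
proof -
  have "c *\<^sub>R x \<in> span (insert x S)"
    by (simp add: span_base span_scale)
  moreover have "x = inverse c *\<^sub>R (c *\<^sub>R x)"
    using assms by simp
  then have "x \<in> span (insert (c *\<^sub>R x) S)"
    by (metis insertI1 span_base span_scale)
  ultimately show ?thesis
    unfolding span_eq insert_subset by (auto intro: span_base)
qed

lemma span_antidiagonal_diagonal_eq_iff:
  fixes u w1 w2 :: complex
  assumes "w1 \<noteq> 0" "w2 \<noteq> 0"
  shows "span {(u, - u), (w1, w1)} = span {(u, - u), (w2, w2)} \<longleftrightarrow> parallel w1 w2"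
proof
  assume "span {(u, - u), (w1, w1)} = span {(u, - u), (w2, w2)}"
  then have "(w2, w2) \<in> span {(u, - u), (w1, w1)}"
    by (simp add: span_base)
  then obtain r where "(w2, w2) - r *\<^sub>R (u, - u) \<in> span {(w1, w1)}"
    by (auto simp: span_breakdown_eq)
  then obtain s where "(w2, w2) - r *\<^sub>R (u, - u) = s *\<^sub>R (w1, w1)"
    by (auto simp: span_singleton)
  then have "w2 - r *\<^sub>R u = s *\<^sub>R w1" and "w2 + r *\<^sub>R u = s *\<^sub>R w1"
    by simp_all
  then have "2 *\<^sub>R w2 = 2 *\<^sub>R (s *\<^sub>R w1)"
    by (metis scaleR_2 add.commute add_diff_cancel_left' diff_add_cancel add.assoc)
  then have "w2 = s *\<^sub>R w1"
    by (metis scaleR_cancel_left zero_neq_numeral)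
  then show "parallel w1 w2"
    unfolding parallel_def by blast
next
  assume "parallel w1 w2"
  then obtain c :: real where "w1 = c *\<^sub>R w2 \<or> w2 = c *\<^sub>R w1"
    unfolding parallel_def by blast
  with assms have "c \<noteq> 0" and "(w1, w1) = c *\<^sub>R (w2, w2) \<or> (w2, w2) = c *\<^sub>R (w1, w1)"
    by auto
  then show "span {(u, - u), (w1, w1)} = span {(u, - u), (w2, w2)}"
    by (metis insert_commute span_insert_scaleR)
qed

lemma parallel_uminus_right: "parallel u (- v) \<longleftrightarrow> parallel u v"
  unfolding parallel_def by (metis minus_minus scaleR_minus_left scaleR_minus_right)

lemma span_pair_union_ne_UNIV:
  fixes A B C :: "'a::euclidean_space"
  assumes "DIM('a) > 3"
  shows "span (span {A, B} \<union> span {A, C}) \<noteq> UNIV"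
proof
  assume "span (span {A, B} \<union> span {A, C}) = UNIV"
  moreover have "span (span {A, B} \<union> span {A, C}) \<subseteq> span {A, B, C}"
    by (intro span_minimal Un_least span_mono) auto
  ultimately have "dim (UNIV :: 'a set) \<le> card {A, B, C}"
    by (intro dim_le_card) auto
  also have "\<dots> \<le> 3"
    by (simp add: card_insert_le_m1)
  finally show False
    using assms by simp
qed

lemma has_vector_derivative_exp_mult_of_real:
  "((\<lambda>t. exp (c * complex_of_real t)) has_vector_derivative c * exp (c * complex_of_real a)) (at a)"
  using exp_scaleR_has_vector_derivative_left[of c a] by (simp add: scaleR_conv_of_real mult.commute)

lemma has_vector_derivative_circle_action:
  "((\<lambda>a. circle_action a v) has_vector_derivative circle_action a (\<i> * fst v, - (\<i> * snd v))) (at a)"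
proof -
  have "((\<lambda>a. circle_action a v) has_vector_derivative
     (\<i> * exp (\<i> * complex_of_real a) * fst v / of_real (sqrt 2),
      - \<i> * exp (- \<i> * complex_of_real a) * snd v / of_real (sqrt 2))) (at a)"
    unfolding circle_action_def
    by (intro has_vector_derivative_Pair has_vector_derivative_divide has_vector_derivative_mult_left
        has_vector_derivative_exp_mult_of_real)
  then show ?thesis
    by (simp add: circle_action_def ac_simps)
qed

lemma has_derivative_Fmap:
  assumes "(g has_vector_derivative w) (at b)"
  shows "(Fmap g has_derivative
           (\<lambda>h. circle_action a (fst h *\<^sub>R (\<i> * g b, - (\<i> * g b)) + snd h *\<^sub>R (w, w))))
         (at (a, b))"
proof -
  have g: "((\<lambda>p. g (snd p)) has_derivative (\<lambda>h. snd h *\<^sub>R w)) (at (a, b))"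
    using has_derivative_compose[OF has_derivative_snd[OF has_derivative_ident, of "at (a, b)"]]
      assms[unfolded has_vector_derivative_def]
    by simp
  have exp: "((\<lambda>p. exp (c * complex_of_real (fst p))) has_derivative
               (\<lambda>h. fst h *\<^sub>R (c * exp (c * complex_of_real a)))) (at (a, b))" for c
    using has_derivative_compose[OF has_derivative_fst[OF has_derivative_ident, of "at (a, b)"]]
      has_vector_derivative_exp_mult_of_real[of c a, unfolded has_vector_derivative_def]
    by simp
  show ?thesis
    unfolding Fmap_def[abs_def]
    by (rule has_derivative_eq_rhs, (rule g exp derivative_intros | simp)+)
      (simp add: fun_eq_iff circle_action_def scaleR_conv_of_real algebra_simps add_divide_distrib)
qed

lemma lagrangian_immersion_Fmap:
  assumes "\<And>b. (g has_vector_derivative vderiv g b) (at b)"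
    and "\<And>b. g b \<noteq> 0" and "\<And>b. vderiv g b \<noteq> 0"
  shows "lagrangian_immersion (Fmap g)"
  unfolding lagrangian_immersion_def
proof
  fix p :: "real \<times> real"
  obtain a b where p: "p = (a, b)"
    by fastforce
  define frame where "frame h = fst h *\<^sub>R (\<i> * g b, - (\<i> * g b)) + snd h *\<^sub>R (vderiv g b, vderiv g b)"
    for h :: "real \<times> real"
  have "(Fmap g has_derivative circle_action a \<circ> frame) (at p)"
    using has_derivative_Fmap[OF assms(1)] by (simp add: p frame_def o_def)
  moreover have "inj frame"
    unfolding frame_def by (rule inj_antidiagonal_diagonal) (simp_all add: assms(2,3))
  then have "inj (circle_action a \<circ> frame)"
    by (intro inj_compose inj_circle_action)
  moreover have "omega ((circle_action a \<circ> frame) u) ((circle_action a \<circ> frame) v) = 0" for u v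
    unfolding o_def omega_circle_action frame_def omega_antidiagonal_diagonal by simp
  ultimately show "\<exists>D. (Fmap g has_derivative D) (at p) \<and> inj D \<and> (\<forall>u v. omega (D u) (D v) = 0)"
    by blast
qed

lemma dF_alpha_Fmap: "dF_alpha g (a, b) = circle_action a (\<i> * g b, - (\<i> * g b))"
  unfolding dF_alpha_def Fmap_eq_circle_action
  using vector_derivative_at[OF has_vector_derivative_circle_action] by simp

lemma dF_alpha_eq_if_Fmap_eq:
  assumes "Fmap g p = Fmap g q"
  shows "dF_alpha g p = dF_alpha g q"
proof -
  have "dF_alpha g p = (\<i> * fst (Fmap g p), - (\<i> * snd (Fmap g p)))" for p
    by (cases p) (simp add: dF_alpha_Fmap Fmap_eq_circle_action circle_action_def ac_simps)
  with assms show ?thesis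
    by simp
qed

lemma dF_beta_Fmap:
  assumes "(g has_vector_derivative w) (at b)"
  shows "dF_beta g (a, b) = circle_action a (w, w)"
proof -
  have "((\<lambda>b. circle_action a (g b, g b)) has_vector_derivative circle_action a (w, w)) (at b)"
    using bounded_linear.has_vector_derivative[OF bounded_linear_circle_action
        has_vector_derivative_Pair[OF assms assms]] .
  then show ?thesis
    unfolding dF_beta_def Fmap_eq_circle_action by (simp add: vector_derivative_at)
qed

lemma tangent_plane_Fmap:
  assumes "(g has_vector_derivative w) (at b)"
  shows "tangent_plane g (a, b) = circle_action a ` span {(\<i> * g b, - (\<i> * g b)), (w, w)}"
proof -
  have "tangent_plane g (a, b) = span (circle_action a ` {(\<i> * g b, - (\<i> * g b)), (w, w)})"
    by (simp add: tangent_plane_def dF_alpha_Fmap dF_beta_Fmap[OF assms])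
  also have "\<dots> = circle_action a ` span {(\<i> * g b, - (\<i> * g b)), (w, w)}"
    by (rule span_linear_image[OF bounded_linear.linear[OF bounded_linear_circle_action]])
  finally show ?thesis .
qed

lemma not_transversal_at_if_Fmap_eq:
  assumes "Fmap g p = Fmap g q"
  shows "\<not> transversal_at g p q"
  unfolding transversal_at_def tangent_plane_def dF_alpha_eq_if_Fmap_eq[OF assms]
  by (rule span_pair_union_ne_UNIV) simp

lemma tangent_plane_eq_iff_parallel:
  assumes "(g has_vector_derivative w1) (at b1)" and "(g has_vector_derivative w2) (at b2)"
    and "w1 \<noteq> 0" and "w2 \<noteq> 0"
    and "g b1 = - g b2" and "cong2pi a1 (a2 + pi)"
  shows "tangent_plane g (a1, b1) = tangent_plane g (a2, b2) \<longleftrightarrow> parallel w1 w2"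
proof -
  let ?u = "(\<i> * g b1, - (\<i> * g b1))"
  have act: "circle_action a2 v = circle_action a1 (- v)" for v
    using circle_action_cong[OF assms(6)] circle_action_add_pi
      linear_neg[OF bounded_linear.linear[OF bounded_linear_circle_action]]
    by simp
  have "tangent_plane g (a2, b2) = span (circle_action a1 ` {?u, (- w2, - w2)})"
    by (simp add: tangent_plane_def dF_alpha_Fmap dF_beta_Fmap[OF assms(2)] act assms(5))
  also have "\<dots> = circle_action a1 ` span {?u, (- w2, - w2)}"
    by (rule span_linear_image[OF bounded_linear.linear[OF bounded_linear_circle_action]])
  finally have "tangent_plane g (a1, b1) = tangent_plane g (a2, b2)
      \<longleftrightarrow> span {?u, (w1, w1)} = span {?u, (- w2, - w2)}"
    by (simp add: tangent_plane_Fmap[OF assms(1)] inj_image_eq_iff[OF inj_circle_action])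
  also have "\<dots> \<longleftrightarrow> parallel w1 (- w2)"
    using assms(3,4) by (intro span_antidiagonal_diagonal_eq_iff) simp_all
  finally show ?thesis
    by (simp add: parallel_uminus_right)
qed

lemma Fmap_eq_cases:
  assumes "Fmap g (a1, b1) = Fmap g (a2, b2)" and "g b2 \<noteq> 0"
  obtains "g b1 = g b2" "cong2pi a1 a2" | "g b1 = - g b2" "cong2pi a1 (a2 + pi)"
proof -
  define E1 E2 where "E1 = exp (\<i> * complex_of_real a1)" and "E2 = exp (\<i> * complex_of_real a2)"
  have "exp (- \<i> * complex_of_real a) = inverse (exp (\<i> * complex_of_real a))" for a
    by (simp add: exp_minus)
  with assms(1) have eq: "g b1 * E1 = g b2 * E2" and eq_inv: "g b1 / E1 = g b2 / E2"
    by (simp_all add: Fmap_def E1_def E2_def divide_inverse)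
  have "g b1 * g b1 = (g b1 * E1) * (g b1 / E1)"
    by (simp add: E1_def)
  also have "\<dots> = g b2 * g b2"
    by (simp add: eq eq_inv E2_def)
  finally consider "g b1 = g b2" | "g b1 = - g b2"
    by (auto simp: square_eq_iff)
  then show thesis
  proof cases
    case 1
    with eq assms(2) have "E1 = E2"
      by simp
    with 1 show thesis
      by (intro that(1)) (simp_all add: E1_def E2_def exp_i_eq_iff_cong2pi)
  next
    case 2
    with eq have "g b2 * (- E1) = g b2 * E2"
      by simp
    with assms(2) have "E1 = - E2"
      by (metis minus_equation_iff mult_left_cancel)
    with 2 show thesis
      by (intro that(2)) (simp_all add: E1_def E2_def cong2pi_add_pi_iff)
  qed
qed

lemma Fmap_double_point:
  assumes "\<And>b. g b \<noteq> 0" and "\<And>s t. g s = g t \<Longrightarrow> cong2pi s t"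
    and "Fmap g p = Fmap g q" and "\<not> torus_eq p q"
  shows "g (snd p) = - g (snd q) \<and> cong2pi (fst p) (fst q + pi)"
proof -
  obtain a1 b1 a2 b2 where pq: "p = (a1, b1)" "q = (a2, b2)"
    by fastforce
  from assms(3) assms(1)[of b2] have "g b1 = - g b2 \<and> cong2pi a1 (a2 + pi)"
    unfolding pq
  proof (cases rule: Fmap_eq_cases)
    case 1
    with assms(2) have "torus_eq p q"
      by (simp add: pq torus_eq_def)
    with assms(4) show ?thesis
      by blast
  qed simp
  then show ?thesis
    by (simp add: pq)
qed

lemma Fmap_double_point_unique:
  assumes "\<And>b. g b \<noteq> 0" and "\<And>s t. g s = g t \<Longrightarrow> cong2pi s t"
    and "Fmap g p = Fmap g q" and "Fmap g p = Fmap g r"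
    and "\<not> torus_eq p q" and "\<not> torus_eq p r"
  shows "torus_eq q r"
proof -
  have q: "g (snd p) = - g (snd q)" "exp (\<i> * complex_of_real (fst p)) = - exp (\<i> * complex_of_real (fst q))"
    using Fmap_double_point[OF assms(1,2,3,5)] by (simp_all add: cong2pi_add_pi_iff)
  have r: "g (snd p) = - g (snd r)" "exp (\<i> * complex_of_real (fst p)) = - exp (\<i> * complex_of_real (fst r))"
    using Fmap_double_point[OF assms(1,2,4,6)] by (simp_all add: cong2pi_add_pi_iff)
  have "cong2pi (fst q) (fst r)"
    using q(2) r(2) by (simp flip: exp_i_eq_iff_cong2pi)
  moreover have "cong2pi (snd q) (snd r)"
    using q(1) r(1) by (simp add: assms(2))
  ultimately show ?thesis
    by (simp add: torus_eq_def)
qed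

lemma polar_antipodal:
  assumes "of_real r1 * exp (\<i> * complex_of_real t1) = - (of_real r2 * exp (\<i> * complex_of_real t2))"
    and "r1 > 0" and "r2 > 0"
  shows "r1 = r2 \<and> cong2pi t1 (t2 + pi)"
proof -
  have "r1 = r2"
    using arg_cong[OF assms(1), of norm] assms(2,3) by (simp add: norm_mult)
  with assms(1,3) have "exp (\<i> * complex_of_real t1) = - exp (\<i> * complex_of_real t2)"
    by (metis mult_left_cancel mult_minus_right of_real_eq_0_iff order_less_irrefl)
  with \<open>r1 = r2\<close> show ?thesis
    by (simp add: cong2pi_add_pi_iff)
qed

theorem mainTheorem13:
  fixes \<gamma> :: "real \<Rightarrow> complex" and \<rho> f :: "real \<Rightarrow> real"
  assumes curve: "smooth_regular_simple_closed \<gamma>"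
    and rho_pos: "\<And>b. \<rho> b > 0"
    and polar: "\<And>b. \<gamma> b = of_real (\<rho> b) * exp (\<i> * of_real (f b))"
  shows "lagrangian_immersion (Fmap \<gamma>)
    \<and> (\<forall>a1 b1 a2 b2. Fmap \<gamma> (a1, b1) = Fmap \<gamma> (a2, b2) \<and> \<not> torus_eq (a1, b1) (a2, b2) \<longrightarrow>
          \<rho> b1 = \<rho> b2 \<and> cong2pi (f b1) (f b2 + pi) \<and> cong2pi a1 (a2 + pi))
    \<and> (\<forall>p q r. Fmap \<gamma> p = Fmap \<gamma> q \<and> Fmap \<gamma> p = Fmap \<gamma> r
          \<and> \<not> torus_eq p q \<and> \<not> torus_eq p r \<longrightarrow> torus_eq q r)
    \<and> (\<forall>p q. Fmap \<gamma> p = Fmap \<gamma> q \<and> \<not> torus_eq p q \<longrightarrow>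
          dF_alpha \<gamma> p = dF_alpha \<gamma> q
          \<and> \<not> transversal_at \<gamma> p q
          \<and> (tangent_plane \<gamma> p = tangent_plane \<gamma> q
               \<longleftrightarrow> parallel (vderiv \<gamma> (snd p)) (vderiv \<gamma> (snd q))))"
proof -
  have velocity: "(\<gamma> has_vector_derivative vderiv \<gamma> b) (at b)" for b
    using curve unfolding smooth_regular_simple_closed_def smooth_curve_def vderiv_def
    by (metis funpow_0 vector_derivative_works)
  have regular: "\<And>b. vderiv \<gamma> b \<noteq> 0" and simple: "\<And>s t. \<gamma> s = \<gamma> t \<Longrightarrow> cong2pi s t"
    using curve unfolding smooth_regular_simple_closed_def by blast+
  have nonzero: "\<gamma> b \<noteq> 0" for b
    using polar[of b] rho_pos[of b] by simp
  have "\<rho> b1 = \<rho> b2 \<and> cong2pi (f b1) (f b2 + pi) \<and> cong2pi a1 (a2 + pi)"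
    if "Fmap \<gamma> (a1, b1) = Fmap \<gamma> (a2, b2)" "\<not> torus_eq (a1, b1) (a2, b2)" for a1 b1 a2 b2
    using Fmap_double_point[OF nonzero simple that] rho_pos
      polar_antipodal[of "\<rho> b1" "f b1" "\<rho> b2" "f b2"]
    by (simp add: polar)
  moreover have "dF_alpha \<gamma> p = dF_alpha \<gamma> q \<and> \<not> transversal_at \<gamma> p q
      \<and> (tangent_plane \<gamma> p = tangent_plane \<gamma> q \<longleftrightarrow> parallel (vderiv \<gamma> (snd p)) (vderiv \<gamma> (snd q)))"
    if "Fmap \<gamma> p = Fmap \<gamma> q" "\<not> torus_eq p q" for p q
    using dF_alpha_eq_if_Fmap_eq[OF that(1)] not_transversal_at_if_Fmap_eq[OF that(1)]
      Fmap_double_point[OF nonzero simple that]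
      tangent_plane_eq_iff_parallel[OF velocity velocity regular regular, of "snd p" "snd q" "fst p" "fst q"]
    by simp
  ultimately show ?thesis
    using lagrangian_immersion_Fmap[OF velocity nonzero regular]
      Fmap_double_point_unique[of \<gamma>, OF nonzero simple]
    by blast
qed

end
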